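(* Let $m,n,p,c$ be positive integers. The number of lattice paths from $(0,0)$ to $(m-pn,m+n)$ using the steps $(1,1)$ and $(-p,1)$ in the plane that do not intersect the line $x=c$ equals $|\mathcal{L}_{p,c+pn-m}(0,0;n,m)|$, the number of lattice paths from $(0,0)$ to $(n,m)$ with unit steps $(1,0)$ and $(0,1)$ that stay strictly above the line $y=px-(c+pn-m)$.
   Context: A path with steps $(1,1)$ and $(-p,1)$ is regarded as the polygonal curve formed by its steps; it intersects the line $x=c$ if it touches or crosses that line. A path with steps $(1,0),(0,1)$ stays strictly above the line $y=px-v$ if every lattice point $(x,y)$ on it satisfies $y>px-v$. *)

theory Defs
  imports Main "HOL.Real"
begin

text \<open>A lattice path starting at (0,0) is encoded as a list of step labels (bool);
  a step function maps each label to the actual step vector.\<close>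

definition pstep :: "nat \<Rightarrow> bool \<Rightarrow> int \<times> int" where
  "pstep p b = (if b then (1, 1) else (- int p, 1))"

definition ustep :: "bool \<Rightarrow> int \<times> int" where
  "ustep b = (if b then (1, 0) else (0, 1))"

definition vtx :: "(bool \<Rightarrow> int \<times> int) \<Rightarrow> bool list \<Rightarrow> nat \<Rightarrow> int \<times> int" where
  "vtx f xs k = ((\<Sum>i<k. fst (f (xs ! i))), (\<Sum>i<k. snd (f (xs ! i))))"

definition paths_to :: "(bool \<Rightarrow> int \<times> int) \<Rightarrow> int \<times> int \<Rightarrow> bool list set" where
  "paths_to f e = {xs. vtx f xs (length xs) = e}"

definition meets_vline :: "(bool \<Rightarrow> int \<times> int) \<Rightarrow> int \<Rightarrow> bool list \<Rightarrow> bool" where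
  "meets_vline f c xs \<longleftrightarrow>
     (\<exists>k\<le>length xs. fst (vtx f xs k) = c) \<or>
     (\<exists>i<length xs. \<exists>t::real. 0 \<le> t \<and> t \<le> 1 \<and>
        (1 - t) * real_of_int (fst (vtx f xs i)) + t * real_of_int (fst (vtx f xs (Suc i)))
          = real_of_int c)"

definition Lpaths :: "nat \<Rightarrow> int \<Rightarrow> nat \<Rightarrow> nat \<Rightarrow> bool list set" where
  "Lpaths p v n m = {xs \<in> paths_to ustep (int n, int m).
      \<forall>k\<le>length xs. snd (vtx ustep xs k) > int p * fst (vtx ustep xs k) - v}"

end

theory Submission
  imports Defs
begin

text \<open>A vertex of a path is determined by how many steps of each kind precede it, so both
  sides are sets of words in two letters cut out by linear inequalities on prefix counts.
  Reading a path backwards and exchanging the two step labels turns the prefixes of one word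
  into the complements of the suffixes of the other, and this exchanges the condition
  x < c for a (1,1)/(-p,1) path with the condition y > px - (c + pn - m) for a unit-step path.\<close>

lemma sum_list_map_bool:
  fixes g :: "bool \<Rightarrow> 'a::comm_ring_1"
  shows "sum_list (map g xs) = of_nat (count_list xs True) * g True + of_nat (count_list xs False) * g False"
  by (induction xs) (auto simp: algebra_simps)

lemma vtx_eq_sum_list:
  assumes "k \<le> length xs"
  shows "vtx f xs k = (sum_list (map (fst \<circ> f) (take k xs)), sum_list (map (snd \<circ> f) (take k xs)))"
proof -
  have "(\<Sum>i<k. g (xs ! i)) = sum_list (map g (take k xs))" for g :: "bool \<Rightarrow> int"
  proof -
    have "sum_list (map g (take k xs)) = (\<Sum>i = 0..<k. map g (take k xs) ! i)"
      using assms by (simp add: sum_list_sum_nth min_absorb2)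
    also have "\<dots> = (\<Sum>i<k. g (xs ! i))"
      using assms by (intro sum.cong) auto
    finally show ?thesis ..
  qed
  from this[of "fst \<circ> f"] this[of "snd \<circ> f"] show ?thesis
    by (simp add: vtx_def)
qed

lemma vtx_pstep:
  assumes "k \<le> length xs"
  shows "vtx (pstep p) xs k =
    (int (count_list (take k xs) True) - int p * int (count_list (take k xs) False),
     int (count_list (take k xs) True) + int (count_list (take k xs) False))"
  using assms by (simp add: vtx_eq_sum_list sum_list_map_bool pstep_def)

lemma vtx_ustep:
  assumes "k \<le> length xs"
  shows "vtx ustep xs k = (int (count_list (take k xs) True), int (count_list (take k xs) False))"
  using assms by (simp add: vtx_eq_sum_list sum_list_map_bool ustep_def)

lemma pstep_path_end_iff:
  "vtx (pstep p) xs (length xs) = (int m - int p * int n, int m + int n)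
     \<longleftrightarrow> count_list xs True = m \<and> count_list xs False = n"
proof -
  have "a - int p * b = int m - int p * int n \<and> a + b = int m + int n \<longleftrightarrow> a = int m \<and> b = int n"
    for a b :: int
  proof
    assume eqs: "a - int p * b = int m - int p * int n \<and> a + b = int m + int n"
    then have "(int p + 1) * b = (int p + 1) * int n"
      by (simp add: algebra_simps)
    then show "a = int m \<and> b = int n"
      using eqs by simp
  qed auto
  then show ?thesis
    by (simp add: vtx_pstep)
qed

lemma ustep_path_end_iff:
  "vtx ustep xs (length xs) = (int n, int m) \<longleftrightarrow> count_list xs True = n \<and> count_list xs False = m"
  by (simp add: vtx_ustep)

lemma segment_crosses_level:
  fixes a b c :: real
  assumes "a < c" "c \<le> b"
  shows "\<exists>t. 0 \<le> t \<and> t \<le> 1 \<and> (1 - t) * a + t * b = c"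
proof -
  define t where "t = (c - a) / (b - a)"
  have "0 \<le> t" "t \<le> 1"
    using assms by (auto simp: t_def field_simps)
  moreover have "t * (b - a) = c - a"
    using assms by (simp add: t_def)
  then have "(1 - t) * a + t * b = c"
    by (simp add: algebra_simps)
  ultimately show ?thesis
    by blast
qed

text \<open>Since the path starts at x = 0 < c, it avoids the line exactly when it stays to its left:
  the first vertex at or beyond the line would make the preceding segment cross it.\<close>

lemma not_meets_vline_iff:
  assumes "0 < c"
  shows "\<not> meets_vline f c xs \<longleftrightarrow> (\<forall>k\<le>length xs. fst (vtx f xs k) < c)"
proof
  assume avoid: "\<not> meets_vline f c xs"
  show "\<forall>k\<le>length xs. fst (vtx f xs k) < c"
  proof (intro allI impI)
    fix k
    assume "k \<le> length xs"
    then show "fst (vtx f xs k) < c"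
    proof (induction k)
      case 0
      then show ?case
        using assms by (simp add: vtx_def)
    next
      case (Suc k)
      let ?a = "fst (vtx f xs k)" and ?b = "fst (vtx f xs (Suc k))"
      have "?a < c"
        using Suc by simp
      show ?case
      proof (rule ccontr)
        assume "\<not> ?b < c"
        with \<open>?a < c\<close> obtain t :: real where "0 \<le> t" "t \<le> 1"
          "(1 - t) * real_of_int ?a + t * real_of_int ?b = real_of_int c"
          using segment_crosses_level[of "real_of_int ?a" "real_of_int c" "real_of_int ?b"] by auto
        with Suc.prems avoid show False
          unfolding meets_vline_def by (metis Suc_le_lessD)
      qed
    qed
  qed
next
  assume left: "\<forall>k\<le>length xs. fst (vtx f xs k) < c"
  have "(1 - t) * real_of_int (fst (vtx f xs i)) + t * real_of_int (fst (vtx f xs (Suc i)))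
          < real_of_int c"
    if "i < length xs" "0 \<le> t" "t \<le> 1" for i and t :: real
    using that left by (intro convex_bound_lt) auto
  then show "\<not> meets_vline f c xs"
    using left unfolding meets_vline_def by (metis less_irrefl)
qed

definition flip :: "bool list \<Rightarrow> bool list" where
  "flip xs = map Not (rev xs)"

lemma flip_flip [simp]: "flip (flip xs) = xs"
  by (simp add: flip_def rev_map comp_def)

lemma length_flip [simp]: "length (flip xs) = length xs"
  by (simp add: flip_def)

lemma count_list_flip [simp]: "count_list (flip xs) b = count_list xs (\<not> b)"
  using count_list_map_conv[of Not "rev xs" "\<not> b"] by (simp add: flip_def inj_def)

lemma take_flip: "take k (flip xs) = flip (drop (length xs - k) xs)"
  by (simp add: flip_def take_map take_rev)

lemma count_list_drop:
  "int (count_list (drop j xs) b) = int (count_list xs b) - int (count_list (take j xs) b)"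
  using count_list_append[of "take j xs" "drop j xs" b] by simp

text \<open>The prefix of length len - j of flip xs is the flipped suffix after the j-th step of xs,
  whose step counts are the totals minus those of the prefix of length j.\<close>

lemma above_line_flip_iff:
  assumes "count_list xs True = m" "count_list xs False = n" "j \<le> length xs"
  defines "ys \<equiv> take (length xs - j) (flip xs)"
  shows "int p * int (count_list ys True) - (int c + int p * int n - int m) < int (count_list ys False)
     \<longleftrightarrow> int (count_list (take j xs) True) - int p * int (count_list (take j xs) False) < int c"
proof -
  have "ys = flip (drop j xs)"
    using assms(3) by (simp add: ys_def take_flip)
  then have "int (count_list ys True) = int n - int (count_list (take j xs) False)"
    and "int (count_list ys False) = int m - int (count_list (take j xs) True)"
    using assms(1,2) by (simp_all add: count_list_drop)
  moreover from this(1) have "int p * int (count_list ys True)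
      = int p * int n - int p * int (count_list (take j xs) False)"
    by (simp add: right_diff_distrib)
  ultimately show ?thesis
    by linarith
qed

lemma all_le_reindex:
  fixes n :: nat
  shows "(\<forall>k\<le>n. P k) \<longleftrightarrow> (\<forall>j\<le>n. P (n - j))"
  by (metis diff_diff_cancel diff_le_self)

lemma flip_mem_Lpaths_iff:
  assumes "0 < c"
  shows "flip xs \<in> Lpaths p (int c + int p * int n - int m) n m
    \<longleftrightarrow> xs \<in> paths_to (pstep p) (int m - int p * int n, int m + int n)
        \<and> \<not> meets_vline (pstep p) (int c) xs"
proof (cases "count_list xs True = m \<and> count_list xs False = n")
  case True
  then have "flip xs \<in> Lpaths p (int c + int p * int n - int m) n m
      \<longleftrightarrow> (\<forall>k\<le>length xs. int p * fst (vtx ustep (flip xs) k)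
            - (int c + int p * int n - int m) < snd (vtx ustep (flip xs) k))"
    by (simp add: Lpaths_def paths_to_def ustep_path_end_iff)
  also have "\<dots> \<longleftrightarrow> (\<forall>j\<le>length xs. int p * fst (vtx ustep (flip xs) (length xs - j))
      - (int c + int p * int n - int m) < snd (vtx ustep (flip xs) (length xs - j)))"
    by (rule all_le_reindex)
  also have "\<dots> \<longleftrightarrow> (\<forall>j\<le>length xs. fst (vtx (pstep p) xs j) < int c)"
    using True by (simp add: vtx_ustep vtx_pstep above_line_flip_iff)
  also have "\<dots> \<longleftrightarrow> xs \<in> paths_to (pstep p) (int m - int p * int n, int m + int n)
      \<and> \<not> meets_vline (pstep p) (int c) xs"
    using True assms by (simp add: paths_to_def pstep_path_end_iff not_meets_vline_iff)
  finally show ?thesis .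
next
  case False
  then show ?thesis
    by (auto simp: Lpaths_def paths_to_def ustep_path_end_iff pstep_path_end_iff)
qed

theorem theorem3p1:
  fixes m n p c :: nat
  assumes "0 < m" and "0 < n" and "0 < p" and "0 < c"
  shows "card {xs \<in> paths_to (pstep p) (int m - int p * int n, int m + int n).
                 \<not> meets_vline (pstep p) (int c) xs}
         = card (Lpaths p (int c + int p * int n - int m) n m)"
proof -
  let ?A = "{xs \<in> paths_to (pstep p) (int m - int p * int n, int m + int n).
               \<not> meets_vline (pstep p) (int c) xs}"
  let ?B = "Lpaths p (int c + int p * int n - int m) n m"
  have flip_mem_iff: "flip xs \<in> ?B \<longleftrightarrow> xs \<in> ?A" for xs
    using flip_mem_Lpaths_iff[OF \<open>0 < c\<close>] by simp
  have "bij_betw flip ?A ?B"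
  proof (rule bij_betw_byWitness[where f' = flip])
    show "flip ` ?A \<subseteq> ?B"
      using flip_mem_iff by blast
    show "flip ` ?B \<subseteq> ?A"
      using flip_mem_iff[of "flip _"] by auto
  qed simp_all
  then show ?thesis
    by (rule bij_betw_same_card)
qed

end
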